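(* Let $(\mathbb S,+,\cdot)$ be an S-Ring. Then $0\neq 1$.
   Context: An S-Structure is a triple $(\mathbb S,+,\cdot)$ where $\mathbb S$ is a set and $+,\cdot$ are binary operations on $\mathbb S$ such that: $(\mathbb S,+)$ is a commutative group with identity $0$ (the inverse of $s$ is written $-s$, and $s-t:=s+(-t)$); $\mathbb S$ is closed under $\cdot$; and there exists $s\in\mathbb S$ with $0\cdot s\neq 0$ or $s\cdot 0\neq 0$. Multiplication binds tighter than addition. The structures considered come with a distinguished element of $\mathbb S$ denoted $1$. It is Commutative if $s\cdot t=t\cdot s$ for all $s,t$. For a Commutative S-Structure and $\alpha\in\mathbb S$, put $\mathbb S_\alpha=\{s\in\mathbb S:0\cdot s=s\cdot 0=\alpha\}$ and $\Lambda=\{\alpha\in\mathbb S:\mathbb S_\alpha\neq\emptyset\}$. Wheel Distributive: $s\cdot(t+r)+(s\cdot 0)=(s\cdot t)+(s\cdot r)$ for all $s,t,r\in\mathbb S$. S-Associative: for all $m,n\in\mathbb S_0$ and $s\in\mathbb S$, $m\cdot(n\cdot s)=(m\cdot n)\cdot s-([(m-1)\cdot(n-1)]\cdot(0\cdot s))$. Base: if $\mathbb S_0\neq\emptyset$ and $\alpha\in\Lambda$, $q\in\mathbb S_\alpha$ is a Base for $\mathbb S_\alpha$ if $q+\beta\in\mathbb S_\alpha$ for all $\beta\in\mathbb S_0$ and every $s\in\mathbb S_\alpha$ equals $q+\beta$ for some $\beta\in\mathbb S_0$. Coordinated: $\mathbb S_0\neq\emptyset$ and every $\mathbb S_\alpha$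 with $\alpha\in\Lambda$ has a Base. Standard Bases: a Coordinated Commutative S-Structure has Standard Bases if there is a specified element $q_0(1)\in\mathbb S_1$ which is a Base for $\mathbb S_1$, and for every $\alpha\in\Lambda$ the element $q_0(\alpha):=\alpha\cdot(q_0(1)+1)-1$ lies in $\mathbb S_\alpha$ and is a Base for $\mathbb S_\alpha$. An Essential S-Structure is an S-Structure that is Commutative, Wheel Distributive, S-Associative, has Standard Bases (in particular is Coordinated), satisfies $0,1\in\mathbb S_0$, and satisfies $\mathbb S_0=\{1\cdot x:x\in\mathbb S_0\}$. A Unity is an element $e\in\Lambda$ with $e\cdot s=s\cdot e=s$ for all $s\in\mathbb S$. An S-Ring is an Essential S-Structure which has a Unity. *)

theory Defs
  imports Main
begin

definition comm_group_on :: "'a set \<Rightarrow> ('a \<Rightarrow> 'a \<Rightarrow> 'a) \<Rightarrow> 'a \<Rightarrow> bool" where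
  "comm_group_on S add zero \<longleftrightarrow>
     zero \<in> S \<and>
     (\<forall>s\<in>S. \<forall>t\<in>S. add s t \<in> S) \<and>
     (\<forall>s\<in>S. \<forall>t\<in>S. \<forall>r\<in>S. add (add s t) r = add s (add t r)) \<and>
     (\<forall>s\<in>S. \<forall>t\<in>S. add s t = add t s) \<and>
     (\<forall>s\<in>S. add zero s = s \<and> add s zero = s) \<and>
     (\<forall>s\<in>S. \<exists>t\<in>S. add s t = zero)"

definition sneg :: "'a set \<Rightarrow> ('a \<Rightarrow> 'a \<Rightarrow> 'a) \<Rightarrow> 'a \<Rightarrow> 'a \<Rightarrow> 'a" where
  "sneg S add zero s = (THE t. t \<in> S \<and> add s t = zero)"

definition ssub :: "'a set \<Rightarrow> ('a \<Rightarrow> 'a \<Rightarrow> 'a) \<Rightarrow> 'a \<Rightarrow> 'a \<Rightarrow> 'a \<Rightarrow> 'a" where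
  "ssub S add zero s t = add s (sneg S add zero t)"

definition S_structure :: "'a set \<Rightarrow> ('a \<Rightarrow> 'a \<Rightarrow> 'a) \<Rightarrow> ('a \<Rightarrow> 'a \<Rightarrow> 'a) \<Rightarrow> 'a \<Rightarrow> bool" where
  "S_structure S add mul zero \<longleftrightarrow>
     comm_group_on S add zero \<and>
     (\<forall>s\<in>S. \<forall>t\<in>S. mul s t \<in> S) \<and>
     (\<exists>s\<in>S. mul zero s \<noteq> zero \<or> mul s zero \<noteq> zero)"

definition S_commutative :: "'a set \<Rightarrow> ('a \<Rightarrow> 'a \<Rightarrow> 'a) \<Rightarrow> bool" where
  "S_commutative S mul \<longleftrightarrow> (\<forall>s\<in>S. \<forall>t\<in>S. mul s t = mul t s)"

definition S_alpha :: "'a set \<Rightarrow> ('a \<Rightarrow> 'a \<Rightarrow> 'a) \<Rightarrow> 'a \<Rightarrow> 'a \<Rightarrow> 'a set" where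
  "S_alpha S mul zero \<alpha> = {s \<in> S. mul zero s = \<alpha> \<and> mul s zero = \<alpha>}"

definition S_Lambda :: "'a set \<Rightarrow> ('a \<Rightarrow> 'a \<Rightarrow> 'a) \<Rightarrow> 'a \<Rightarrow> 'a set" where
  "S_Lambda S mul zero = {\<alpha> \<in> S. S_alpha S mul zero \<alpha> \<noteq> {}}"

definition wheel_distributive :: "'a set \<Rightarrow> ('a \<Rightarrow> 'a \<Rightarrow> 'a) \<Rightarrow> ('a \<Rightarrow> 'a \<Rightarrow> 'a) \<Rightarrow> 'a \<Rightarrow> bool" where
  "wheel_distributive S add mul zero \<longleftrightarrow>
     (\<forall>s\<in>S. \<forall>t\<in>S. \<forall>r\<in>S. add (mul s (add t r)) (mul s zero) = add (mul s t) (mul s r))"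

definition S_associative :: "'a set \<Rightarrow> ('a \<Rightarrow> 'a \<Rightarrow> 'a) \<Rightarrow> ('a \<Rightarrow> 'a \<Rightarrow> 'a) \<Rightarrow> 'a \<Rightarrow> 'a \<Rightarrow> bool" where
  "S_associative S add mul zero one \<longleftrightarrow>
     (\<forall>m\<in>S_alpha S mul zero zero. \<forall>n\<in>S_alpha S mul zero zero. \<forall>s\<in>S.
        mul m (mul n s) =
        ssub S add zero (mul (mul m n) s)
          (mul (mul (ssub S add zero m one) (ssub S add zero n one)) (mul zero s)))"

definition is_base :: "'a set \<Rightarrow> ('a \<Rightarrow> 'a \<Rightarrow> 'a) \<Rightarrow> ('a \<Rightarrow> 'a \<Rightarrow> 'a) \<Rightarrow> 'a \<Rightarrow> 'a \<Rightarrow> 'a \<Rightarrow> bool" where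
  "is_base S add mul zero \<alpha> q \<longleftrightarrow>
     q \<in> S_alpha S mul zero \<alpha> \<and>
     (\<forall>\<beta>\<in>S_alpha S mul zero zero. add q \<beta> \<in> S_alpha S mul zero \<alpha>) \<and>
     (\<forall>s\<in>S_alpha S mul zero \<alpha>. \<exists>\<beta>\<in>S_alpha S mul zero zero. s = add q \<beta>)"

definition coordinated :: "'a set \<Rightarrow> ('a \<Rightarrow> 'a \<Rightarrow> 'a) \<Rightarrow> ('a \<Rightarrow> 'a \<Rightarrow> 'a) \<Rightarrow> 'a \<Rightarrow> bool" where
  "coordinated S add mul zero \<longleftrightarrow>
     S_alpha S mul zero zero \<noteq> {} \<and>
     (\<forall>\<alpha>\<in>S_Lambda S mul zero. \<exists>q. is_base S add mul zero \<alpha> q)"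

definition standard_bases :: "'a set \<Rightarrow> ('a \<Rightarrow> 'a \<Rightarrow> 'a) \<Rightarrow> ('a \<Rightarrow> 'a \<Rightarrow> 'a) \<Rightarrow> 'a \<Rightarrow> 'a \<Rightarrow> bool" where
  "standard_bases S add mul zero one \<longleftrightarrow>
     coordinated S add mul zero \<and>
     (\<exists>q01. q01 \<in> S_alpha S mul zero one \<and> is_base S add mul zero one q01 \<and>
        (\<forall>\<alpha>\<in>S_Lambda S mul zero.
           ssub S add zero (mul \<alpha> (add q01 one)) one \<in> S_alpha S mul zero \<alpha> \<and>
           is_base S add mul zero \<alpha> (ssub S add zero (mul \<alpha> (add q01 one)) one)))"

definition essential_S_structure :: "'a set \<Rightarrow> ('a \<Rightarrow> 'a \<Rightarrow> 'a) \<Rightarrow> ('a \<Rightarrow> 'a \<Rightarrow> 'a) \<Rightarrow> 'a \<Rightarrow> 'a \<Rightarrow> bool" where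
  "essential_S_structure S add mul zero one \<longleftrightarrow>
     S_structure S add mul zero \<and> one \<in> S \<and>
     S_commutative S mul \<and>
     wheel_distributive S add mul zero \<and>
     S_associative S add mul zero one \<and>
     standard_bases S add mul zero one \<and>
     zero \<in> S_alpha S mul zero zero \<and> one \<in> S_alpha S mul zero zero \<and>
     S_alpha S mul zero zero = {mul one x | x. x \<in> S_alpha S mul zero zero}"

definition is_unity :: "'a set \<Rightarrow> ('a \<Rightarrow> 'a \<Rightarrow> 'a) \<Rightarrow> 'a \<Rightarrow> 'a \<Rightarrow> bool" where
  "is_unity S mul zero e \<longleftrightarrow>
     e \<in> S_Lambda S mul zero \<and> (\<forall>s\<in>S. mul e s = s \<and> mul s e = s)"

definition S_ring :: "'a set \<Rightarrow> ('a \<Rightarrow> 'a \<Rightarrow> 'a) \<Rightarrow> ('a \<Rightarrow> 'a \<Rightarrow> 'a) \<Rightarrow> 'a \<Rightarrow> 'a \<Rightarrow> bool" where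
  "S_ring S add mul zero one \<longleftrightarrow>
     essential_S_structure S add mul zero one \<and> (\<exists>e. is_unity S mul zero e)"

end

theory Submission
  imports Defs
begin

text \<open>If \<open>0 = 1\<close>, the unity \<open>e\<close> lies in \<open>\<bbbS>\<^sub>0 = 1\<cdot>\<bbbS>\<^sub>0 = 0\<cdot>\<bbbS>\<^sub>0 = {0}\<close>, so \<open>0\<close> itself is
  a unity. S-Associativity with \<open>m = n = 0\<close> then reads \<open>s = s - s\<close>, since the correction
  factor \<open>(0 - 1)\<cdot>(0 - 1)\<close> collapses to \<open>0\<close>. Hence every element is \<open>0\<close>, contradicting
  the existence of some \<open>s\<close> with \<open>0\<cdot>s \<noteq> 0\<close> or \<open>s\<cdot>0 \<noteq> 0\<close>.\<close>

lemma comm_group_on_right_inverse_unique: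
  assumes G: "comm_group_on S add zero" and s: "s \<in> S"
    and t: "t \<in> S" "add s t = zero" and t': "t' \<in> S" "add s t' = zero"
  shows "t' = t"
proof -
  have assoc: "\<forall>a\<in>S. \<forall>b\<in>S. \<forall>c\<in>S. add (add a b) c = add a (add b c)"
    and comm: "\<forall>a\<in>S. \<forall>b\<in>S. add a b = add b a"
    and neutral: "\<forall>a\<in>S. add zero a = a \<and> add a zero = a"
    using G unfolding comm_group_on_def by auto
  have "t' = add t' (add s t)" using neutral t t' by simp
  also have "\<dots> = add (add t' s) t" using assoc s t t' by simp
  also have "\<dots> = add (add s t') t" using comm s t' by simp
  also have "\<dots> = t" using neutral t t' by simp
  finally show ?thesis .
qed

lemma sneg_closed_right_inverse:
  assumes G: "comm_group_on S add zero" and s: "s \<in> S"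
  shows "sneg S add zero s \<in> S" "add s (sneg S add zero s) = zero"
proof -
  obtain t where t: "t \<in> S" "add s t = zero"
    using G s unfolding comm_group_on_def by blast
  have "sneg S add zero s = t"
    unfolding sneg_def
  proof (rule the_equality)
    show "t \<in> S \<and> add s t = zero" using t by simp
    show "t' = t" if "t' \<in> S \<and> add s t' = zero" for t'
      using comm_group_on_right_inverse_unique[OF G s t] that by blast
  qed
  then show "sneg S add zero s \<in> S" "add s (sneg S add zero s) = zero" using t by simp_all
qed

lemma ssub_self:
  assumes "comm_group_on S add zero" and "s \<in> S"
  shows "ssub S add zero s s = zero"
  unfolding ssub_def using sneg_closed_right_inverse[OF assms] by simp

lemma unity_in_S_alpha_zero:
  assumes "is_unity S mul zero e" and "zero \<in> S"
  shows "e \<in> S_alpha S mul zero zero"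
  using assms unfolding is_unity_def S_Lambda_def S_alpha_def by auto

lemma unity_eq_zero_if_zero_eq_one:
  assumes "essential_S_structure S add mul zero one" and "is_unity S mul zero e"
    and "zero = one"
  shows "e = zero"
proof -
  have "S_alpha S mul zero zero = {mul one x | x. x \<in> S_alpha S mul zero zero}"
    and "zero \<in> S"
    using assms(1) unfolding essential_S_structure_def S_alpha_def by auto
  with unity_in_S_alpha_zero[OF assms(2)] obtain x
    where "x \<in> S_alpha S mul zero zero" "e = mul one x"
    by auto
  then show ?thesis using \<open>zero = one\<close> unfolding S_alpha_def by simp
qed

lemma S_associative_trivial_if_zero_unity:
  assumes G: "comm_group_on S add zero"
    and assoc: "S_associative S add mul zero zero"
    and unity: "\<And>s. s \<in> S \<Longrightarrow> mul zero s = s \<and> mul s zero = s"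
    and s: "s \<in> S"
  shows "s = zero"
proof -
  have zero: "zero \<in> S" using G unfolding comm_group_on_def by simp
  then have "zero \<in> S_alpha S mul zero zero" using unity unfolding S_alpha_def by simp
  then have "mul zero (mul zero s) = ssub S add zero (mul (mul zero zero) s)
      (mul (mul (ssub S add zero zero zero) (ssub S add zero zero zero)) (mul zero s))"
    using assoc s unfolding S_associative_def by blast
  then have "s = ssub S add zero s s"
    using unity s zero ssub_self[OF G zero] by simp
  then show ?thesis using ssub_self[OF G s] by simp
qed

theorem theorem3p2p2:
  fixes S :: "'a set" and add mul :: "'a \<Rightarrow> 'a \<Rightarrow> 'a" and zero one :: 'a
  assumes "S_ring S add mul zero one"
  shows "zero \<noteq> one"
proof
  assume zero_one: "zero = one"
  obtain e where ess: "essential_S_structure S add mul zero one"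
    and e: "is_unity S mul zero e"
    using assms unfolding S_ring_def by blast
  have SS: "S_structure S add mul zero" and assoc: "S_associative S add mul zero zero"
    using ess zero_one unfolding essential_S_structure_def by simp_all
  have G: "comm_group_on S add zero" using SS unfolding S_structure_def by simp
  have unity: "mul zero s = s \<and> mul s zero = s" if "s \<in> S" for s
    using e unity_eq_zero_if_zero_eq_one[OF ess e zero_one] that
    unfolding is_unity_def by simp
  obtain s where "s \<in> S" "mul zero s \<noteq> zero \<or> mul s zero \<noteq> zero"
    using SS unfolding S_structure_def by blast
  with unity S_associative_trivial_if_zero_unity[OF G assoc unity] show False by simp
qed

end
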